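(* Let $\rho=0.4353184958$, $\tau=0.1230440086$, $\varepsilon=2\times 10^{-10}$ and $U=\{q\in\mathbb{C}:\ \mathrm{Re}\,q\in[\rho-\varepsilon,\rho+\varepsilon],\ \mathrm{Im}\,q\in[\tau-\varepsilon,\tau+\varepsilon]\}$. Let $5\leq n\leq\infty$ and let $r=(r_5,r_6,\ldots)$ (indices $5\leq j\leq n$) with each $r_j\in[0,1]$, and define $$\theta_r(q,z)=1+qz+q^3z^2+q^6z^3+q^{10}z^4+\sum_{j=5}^{n}r_jq^{j(j+1)/2}z^j.$$ Then for every $q\in U$ and every $z\in\mathbb{C}$ with $|z|=|q|^{-2}$ one has $\theta_r(q,z)\neq 0$.
   Context: Here $\rho,\tau$ are the given rational (finite decimal) numbers. *)

theory Defs
  imports Complex_Main "HOL-Library.Extended_Nat"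
begin

definition theta_r :: "(nat \<Rightarrow> real) \<Rightarrow> enat \<Rightarrow> complex \<Rightarrow> complex \<Rightarrow> complex" where
  "theta_r r n q z = 1 + q * z + q ^ 3 * z ^ 2 + q ^ 6 * z ^ 3 + q ^ 10 * z ^ 4 +
     (\<Sum>j. if 5 \<le> j \<and> enat j \<le> n
           then complex_of_real (r j) * q ^ (j * (j + 1) div 2) * z ^ j else 0)"

definition rho :: real where "rho = 0.4353184958"
definition tau :: real where "tau = 0.1230440086"
definition eps :: real where "eps = 2 / 10 ^ 10"

definition U :: "complex set" where
  "U = {q. Re q \<in> {rho - eps .. rho + eps} \<and> Im q \<in> {tau - eps .. tau + eps}}"

end

theory Submission
  imports Defs
begin

text \<open>Put \<open>w = q\<^sup>2 z\<close>, so that \<open>|w| = 1\<close>. Then \<open>q \<theta>\<^sub>r(q, z)\<close> is the quartic (\<open>theta_head\<close>)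
  \<open>H(q, w) = q + w + w\<^sup>2 + q w\<^sup>3 + q\<^sup>3 w\<^sup>4\<close> plus \<open>q\<close> times the tail \<open>j \<ge> 5\<close>, and since
  \<open>j(j + 1)/2 - 2j \<ge> 4j - 15\<close> the tail is dominated by a geometric series: for \<open>|q| \<le> 0.46\<close>
  its contribution is below \<open>|q|\<^sup>6 / (1 - |q|\<^sup>4) < 0.01\<close>. It therefore suffices to show
  \<open>|H(q, w)| \<ge> 0.01\<close> on the unit circle. At the rational point \<open>q\<^sub>0 = 0.435 + 0.123i\<close>
  the circle is cut into 29 arcs, each inside a small disc around a rational centre \<open>c\<close>;
  the exact expansion \<open>H(w) = H(c) + (w - c) H'(c) + (w - c)\<^sup>2 R\<close> with \<open>|R| \<le> 3.6\<close> turns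
  finitely many rational inequalities at the centres into \<open>|H(q\<^sub>0, w)| \<ge> 0.012\<close>. Moving
  \<open>q\<close> from \<open>q\<^sub>0\<close> into \<open>U\<close> changes \<open>H\<close> by at most \<open>0.002\<close>.\<close>

definition theta_head :: "complex \<Rightarrow> complex \<Rightarrow> complex" where
  "theta_head q w = q + w + w^2 + q * w^3 + q^3 * w^4"

definition theta_tail_term :: "(nat \<Rightarrow> real) \<Rightarrow> enat \<Rightarrow> complex \<Rightarrow> complex \<Rightarrow> nat \<Rightarrow> complex" where
  "theta_tail_term r n q z j =
     (if 5 \<le> j \<and> enat j \<le> n then complex_of_real (r j) * q ^ (j * (j + 1) div 2) * z ^ j else 0)"

lemma mult_theta_r_eq:
  "q * theta_r r n q z = theta_head q (q^2 * z) + q * suminf (theta_tail_term r n q z)"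
  unfolding theta_r_def theta_tail_term_def theta_head_def by algebra

lemma triangular_exponent_ge: "2 * ((k::nat) + 5) + (5 + 4 * k) \<le> (k + 5) * (k + 5 + 1) div 2"
proof -
  have "2 * (2 * (k + 5) + (5 + 4 * k)) \<le> (k + 5) * (k + 5 + 1)"
    by (simp add: algebra_simps)
  then show ?thesis using div_le_mono[of _ _ 2] by fastforce
qed

lemma norm_theta_tail_term_le:
  assumes r: "\<And>j. 5 \<le> j \<Longrightarrow> enat j \<le> n \<Longrightarrow> \<bar>r j\<bar> \<le> 1"
    and q: "0 < cmod q" "cmod q \<le> 1" and z: "cmod z \<le> 1 / cmod q ^ 2"
  shows "cmod (theta_tail_term r n q z (k + 5)) \<le> cmod q ^ 5 * (cmod q ^ 4) ^ k"
proof (cases "enat (k + 5) \<le> n")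
  case True
  define x where "x = cmod q"
  define e where "e = (k + 5) * (k + 5 + 1) div 2"
  have x: "0 < x" "x \<le> 1" using q by (auto simp: x_def)
  have "cmod (theta_tail_term r n q z (k + 5)) = \<bar>r (k + 5)\<bar> * x ^ e * cmod z ^ (k + 5)"
    using True by (simp add: theta_tail_term_def norm_mult norm_power x_def e_def)
  also have "\<dots> \<le> 1 * x ^ e * (1 / x ^ 2) ^ (k + 5)"
    using r[of "k + 5"] True z x by (intro mult_mono power_mono) (auto simp: x_def)
  also have "x ^ e = (x ^ 2) ^ (k + 5) * x ^ (5 + 4 * k) * x ^ (e - (2 * (k + 5) + (5 + 4 * k)))"
    using triangular_exponent_ge[of k]
    by (simp add: e_def flip: power_mult power_add)
  also have "1 * \<dots> * (1 / x ^ 2) ^ (k + 5) \<le> x ^ (5 + 4 * k)"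
    using x by (simp add: power_one_over field_simps power_le_one)
  finally show ?thesis by (simp add: x_def power_add flip: power_mult)
qed (simp add: theta_tail_term_def)

lemma norm_theta_tail_le:
  assumes r: "\<And>j. 5 \<le> j \<Longrightarrow> enat j \<le> n \<Longrightarrow> \<bar>r j\<bar> \<le> 1"
    and q: "0 < cmod q" "cmod q < 1" and z: "cmod z \<le> 1 / cmod q ^ 2"
  shows "cmod (suminf (theta_tail_term r n q z)) \<le> cmod q ^ 5 / (1 - cmod q ^ 4)"
proof -
  define f where "f = (\<lambda>k. theta_tail_term r n q z (k + 5))"
  have "norm (cmod q ^ 4) < 1"
    using q by (simp add: power_less_one_iff)
  then have geom: "(\<lambda>k. cmod q ^ 5 * (cmod q ^ 4) ^ k) sums (cmod q ^ 5 / (1 - cmod q ^ 4))"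
    using sums_mult[OF geometric_sums, of "cmod q ^ 4" "cmod q ^ 5"] by simp
  have bound: "norm (f k) \<le> cmod q ^ 5 * (cmod q ^ 4) ^ k" for k
    unfolding f_def using norm_theta_tail_term_le[OF r] q z by simp
  have "summable f"
    using summable_comparison_test'[OF sums_summable[OF geom] bound] .
  moreover have "\<And>j. j < 5 \<Longrightarrow> theta_tail_term r n q z j = 0"
    by (simp add: theta_tail_term_def)
  ultimately have "theta_tail_term r n q z sums suminf f"
    using sums_zero_iff_shift summable_sums unfolding f_def by blast
  then have "suminf (theta_tail_term r n q z) = suminf f"
    by (simp add: sums_iff)
  also have "norm \<dots> \<le> cmod q ^ 5 / (1 - cmod q ^ 4)"
    using norm_suminf_le[OF bound sums_summable[OF geom]] geom by (simp add: sums_iff)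
  finally show ?thesis .
qed

section \<open>Taylor bound for the quartic head\<close>

definition theta_head_deriv :: "complex \<Rightarrow> complex \<Rightarrow> complex" where
  "theta_head_deriv q w = 1 + 2 * w + 3 * q * w^2 + 4 * q^3 * w^3"

definition theta_head_remainder :: "complex \<Rightarrow> complex \<Rightarrow> complex \<Rightarrow> complex" where
  "theta_head_remainder q c w = 1 + q * (w + 2 * c) + q^3 * (w^2 + 2 * w * c + 3 * c^2)"

lemma theta_head_taylor:
  "theta_head q w = theta_head q c + (w - c) * theta_head_deriv q c
     + (w - c)^2 * theta_head_remainder q c w"
  unfolding theta_head_def theta_head_deriv_def theta_head_remainder_def by algebra

lemma norm_le_sum3: "norm (x + y + z) \<le> norm x + norm y + (norm z :: real)"
  using norm_triangle_ineq[of "x + y" z] norm_triangle_ineq[of x y] by linarith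

lemma norm_theta_head_remainder_le:
  assumes q: "cmod q \<le> 23/50" and w: "cmod w = 1" and c: "cmod c \<le> 6/5"
  shows "cmod (theta_head_remainder q c w) \<le> 18/5"
proof -
  have "cmod (w + 2 * c) \<le> 1 + 2 * (6/5)"
    using norm_triangle_ineq[of w "2 * c"] w c by (simp add: norm_mult)
  moreover have "cmod (w^2 + 2 * w * c + 3 * c^2) \<le> 1 + 2 * (6/5) + 3 * (6/5)^2"
  proof -
    have "cmod (w^2 + 2 * w * c + 3 * c^2) \<le> 1 + 2 * cmod c + 3 * cmod c ^ 2"
      using norm_le_sum3[of "w^2" "2 * w * c" "3 * c^2"] w by (simp add: norm_mult norm_power)
    also have "\<dots> \<le> 1 + 2 * (6/5) + 3 * (6/5)^2"
      using c by (intro add_mono mult_left_mono power_mono) auto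
    finally show ?thesis .
  qed
  moreover have "cmod (q^3) \<le> (23/50)^3"
    unfolding norm_power using q by (intro power_mono) auto
  ultimately have "1 + cmod q * cmod (w + 2 * c) + cmod (q^3) * cmod (w^2 + 2 * w * c + 3 * c^2)
      \<le> 1 + 23/50 * (1 + 2 * (6/5)) + (23/50)^3 * (1 + 2 * (6/5) + 3 * (6/5)^2)"
    using q by (intro add_mono mult_mono) auto
  then show ?thesis
    using norm_le_sum3[of 1 "q * (w + 2 * c)" "q^3 * (w^2 + 2 * w * c + 3 * c^2)"]
    by (simp add: theta_head_remainder_def norm_mult power_divide)
qed

lemma norm_theta_head_ge_near:
  assumes q: "cmod q \<le> 23/50" and w: "cmod w = 1" and wc: "cmod (w - c) \<le> h" and h: "h \<le> 1/5"
    and g: "cmod (theta_head_deriv q c) \<le> g"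
  shows "cmod (theta_head q c) - g * h - 18/5 * h^2 \<le> cmod (theta_head q w)"
proof -
  define R where "R = theta_head_remainder q c w"
  have "cmod c \<le> 6/5"
    using norm_triangle_ineq2[of c w] norm_minus_commute[of w c] w wc h by linarith
  then have "cmod R \<le> 18/5"
    unfolding R_def using norm_theta_head_remainder_le q w by blast
  then have "cmod ((w - c)^2 * R) \<le> h^2 * (18/5)"
    unfolding norm_mult norm_power using wc by (intro mult_mono power_mono) auto
  moreover have "cmod ((w - c) * theta_head_deriv q c) \<le> h * g"
    unfolding norm_mult using wc g by (intro mult_mono) (auto intro: order_trans[OF norm_ge_zero])
  moreover have "theta_head q c = theta_head q w - (w - c) * theta_head_deriv q c - (w - c)^2 * R"
    unfolding R_def by (simp add: theta_head_taylor[of q w c])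
  then have "cmod (theta_head q c)
      \<le> cmod (theta_head q w) + cmod ((w - c) * theta_head_deriv q c) + cmod ((w - c)^2 * R)"
    by (metis diff_conv_add_uminus norm_le_sum3 norm_minus_cancel)
  ultimately show ?thesis by (simp add: algebra_simps)
qed

section \<open>Covering the unit circle\<close>

text \<open>Each half circle is parametrised by the coordinate \<open>x\<close> along its diameter, \<open>y \<ge> 0\<close>
  being the distance from the diameter.\<close>

datatype half_circle = Upper | Lower | Right | Left

fun half_circle_point :: "half_circle \<Rightarrow> real \<Rightarrow> real \<Rightarrow> complex" where
  "half_circle_point Upper x y = Complex x y"
| "half_circle_point Lower x y = Complex x (- y)"
| "half_circle_point Right x y = Complex y x"
| "half_circle_point Left x y = Complex (- y) x"

lemma norm_half_circle_point_diff:
  "cmod (half_circle_point s x y - half_circle_point s x' y') = cmod (Complex x y - Complex x' y')"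
  by (cases s) (simp_all add: complex_diff complex_norm power2_commute add.commute)

lemma norm_half_circle_point: "cmod (half_circle_point s x y) = cmod (Complex x y)"
  using norm_half_circle_point_diff[of s x y 0 0] by (cases s) (simp_all add: complex_diff)

fun half_circle_bound :: "half_circle \<Rightarrow> real" where
  "half_circle_bound Upper = 4/5"
| "half_circle_bound Lower = 4/5"
| "half_circle_bound Right = 3/5"
| "half_circle_bound Left = 3/5"

lemma unit_circle_cover:
  assumes "cmod w = 1"
  obtains s x y where "w = half_circle_point s x y" "x^2 + y^2 = 1" "0 \<le> y"
    "\<bar>x\<bar> \<le> half_circle_bound s"
proof -
  have unit: "Re w ^ 2 + Im w ^ 2 = 1"
    using assms by (simp add: cmod_power2[symmetric])
  consider "\<bar>Re w\<bar> \<le> 4/5" | "\<bar>Im w\<bar> \<le> 3/5"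
  proof (cases "\<bar>Re w\<bar> \<le> 4/5")
    case False
    then have "(4/5)^2 \<le> \<bar>Re w\<bar>^2" by (intro power_mono) auto
    then have "\<bar>Im w\<bar>^2 \<le> (3/5)^2" using unit by (simp add: power2_eq_square)
    then have "\<bar>Im w\<bar> \<le> 3/5" by (rule power2_le_imp_le) simp
    then show ?thesis using that by blast
  qed blast
  then show ?thesis
  proof cases
    case 1
    show ?thesis
    proof (cases "0 \<le> Im w")
      case True then show ?thesis using that[of Upper "Re w" "Im w"] 1 unit by simp
    next
      case False then show ?thesis using that[of Lower "Re w" "- Im w"] 1 unit by simp
    qed
  next
    case 2
    show ?thesis
    proof (cases "0 \<le> Re w")
      case True then show ?thesis using that[of Right "Im w" "Re w"] 2 unit by simp
    next
      case False then show ?thesis using that[of Left "Im w" "- Re w"] 2 unit by simp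
    qed
  qed
qed

lemma unit_arc_height_bounds:
  fixes x y :: real
  assumes unit: "x^2 + y^2 = 1" and y: "0 \<le> y" and x: "a \<le> x" "x \<le> b"
    and lo: "0 \<le> yl" "yl^2 + a^2 \<le> 1" "yl^2 + b^2 \<le> 1"
    and hi: "0 \<le> yh" "0 \<le> a \<and> 1 \<le> yh^2 + a^2 \<or> b \<le> 0 \<and> 1 \<le> yh^2 + b^2 \<or> 1 \<le> yh^2"
  shows "yl \<le> y" "y \<le> yh"
proof -
  have "x^2 \<le> a^2 \<or> x^2 \<le> b^2"
  proof (cases "0 \<le> x")
    case True
    then show ?thesis using x power_mono[of x b 2] by simp
  next
    case False
    then show ?thesis using x power_mono[of "- x" "- a" 2] by simp
  qed
  then have "yl^2 \<le> y^2" using unit lo by linarith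
  then show "yl \<le> y" using y by (rule power2_le_imp_le)
  have "1 \<le> yh^2 + x^2"
    using hi(2)
  proof (elim disjE conjE)
    assume "0 \<le> a" "1 \<le> yh^2 + a^2"
    then show ?thesis using x power_mono[of a x 2] by linarith
  next
    assume "b \<le> 0" "1 \<le> yh^2 + b^2"
    moreover have "(- b)^2 \<le> (- x)^2"
      using x \<open>b \<le> 0\<close> by (intro power_mono) auto
    ultimately show ?thesis by simp
  qed (simp add: add_increasing2)
  then have "y^2 \<le> yh^2" using unit by linarith
  then show "y \<le> yh" using hi(1) by (rule power2_le_imp_le)
qed

lemma power2_diff_midpoint_le:
  fixes x :: real
  assumes "a \<le> x" "x \<le> b"
  shows "(x - (a + b) / 2)^2 \<le> (b - a)^2 / 4"
proof -
  have "(x - (a + b) / 2)^2 = (b - a)^2 / 4 - (x - a) * (b - x)"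
    by (simp add: power2_eq_square field_simps)
  then show ?thesis using assms by simp
qed

lemma norm_diff_box_center_le:
  assumes "a \<le> x" "x \<le> b" "c \<le> y" "y \<le> d" "(b - a)^2 / 4 + (d - c)^2 / 4 \<le> h^2" "0 \<le> h"
  shows "cmod (Complex x y - Complex ((a + b) / 2) ((c + d) / 2)) \<le> h"
proof -
  have "cmod (Complex x y - Complex ((a + b) / 2) ((c + d) / 2)) ^ 2 \<le> h^2"
    using power2_diff_midpoint_le[of a x b] power2_diff_midpoint_le[of c y d] assms
    by (simp add: cmod_power2 complex_diff)
  then show ?thesis using assms(6) power2_le_imp_le by blast
qed

fun intervals_cover :: "real \<Rightarrow> real \<Rightarrow> (real \<times> real) list \<Rightarrow> bool" where
  "intervals_cover lo hi [] \<longleftrightarrow> False"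
| "intervals_cover lo hi ((a, b) # is) \<longleftrightarrow> a \<le> lo \<and> (hi \<le> b \<or> intervals_cover b hi is)"

lemma intervals_cover_imp_ex:
  "intervals_cover lo hi is \<Longrightarrow> lo \<le> x \<Longrightarrow> x \<le> hi \<Longrightarrow> \<exists>(a, b) \<in> set is. a \<le> x \<and> x \<le> b"
proof (induction "is" arbitrary: lo)
  case (Cons ab "is")
  then show ?case by (cases ab; cases "x \<le> snd ab") auto
qed simp

section \<open>The certified lower bound at \<open>q\<^sub>0\<close>\<close>

definition q0 :: complex where "q0 = Complex (435/1000) (123/1000)"

lemma norm_q0_le: "cmod q0 \<le> 23/50"
  by (rule power2_le_imp_le) (simp_all add: q0_def cmod_power2 power_divide)

text \<open>A cell \<open>(a, b, y\<^sub>l, y\<^sub>h, h, g)\<close> covers the points of a half circle with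
  \<open>a \<le> x \<le> b\<close>: they lie in the box \<open>[a, b] \<times> [y\<^sub>l, y\<^sub>h]\<close>, hence within distance \<open>h\<close> of
  its centre \<open>c\<close>, and \<open>g\<close> bounds \<open>|H'(q\<^sub>0, c)|\<close>. Norms are compared through their squares so
  that every condition is a rational inequality decidable by simplification.\<close>

type_synonym arc_cell = "real \<times> real \<times> real \<times> real \<times> real \<times> real"

definition arc_cell_ok :: "half_circle \<Rightarrow> arc_cell \<Rightarrow> bool" where
  "arc_cell_ok s = (\<lambda>(a, b, yl, yh, h, g).
     let c = half_circle_point s ((a + b) / 2) ((yl + yh) / 2) in
       0 \<le> yl \<and> yl^2 + a^2 \<le> 1 \<and> yl^2 + b^2 \<le> 1 \<and>
       0 \<le> yh \<and> (0 \<le> a \<and> 1 \<le> yh^2 + a^2 \<or> b \<le> 0 \<and> 1 \<le> yh^2 + b^2 \<or> 1 \<le> yh^2) \<and>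
       (b - a)^2 / 4 + (yh - yl)^2 / 4 \<le> h^2 \<and> 0 \<le> h \<and> h \<le> 1/5 \<and>
       0 \<le> g \<and> cmod (theta_head_deriv q0 c) ^ 2 \<le> g^2 \<and>
       (12/1000 + g * h + 18/5 * h^2)^2 \<le> cmod (theta_head q0 c) ^ 2)"

lemma arc_cell_ok_imp_norm_theta_head_ge:
  assumes ok: "arc_cell_ok s (a, b, yl, yh, h, g)"
    and unit: "x^2 + y^2 = 1" and y: "0 \<le> y" and x: "a \<le> x" "x \<le> b"
  shows "12/1000 \<le> cmod (theta_head q0 (half_circle_point s x y))"
proof -
  define c where "c = half_circle_point s ((a + b) / 2) ((yl + yh) / 2)"
  have lo: "0 \<le> yl" "yl^2 + a^2 \<le> 1" "yl^2 + b^2 \<le> 1"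
    and hi: "0 \<le> yh" "0 \<le> a \<and> 1 \<le> yh^2 + a^2 \<or> b \<le> 0 \<and> 1 \<le> yh^2 + b^2 \<or> 1 \<le> yh^2"
    and h: "(b - a)^2 / 4 + (yh - yl)^2 / 4 \<le> h^2" "0 \<le> h" "h \<le> 1/5"
    and g: "0 \<le> g" "cmod (theta_head_deriv q0 c) ^ 2 \<le> g^2"
    and centre: "(12/1000 + g * h + 18/5 * h^2)^2 \<le> cmod (theta_head q0 c) ^ 2"
    using ok unfolding arc_cell_ok_def prod.case Let_def c_def by blast+
  have "yl \<le> y" "y \<le> yh"
    using unit_arc_height_bounds[OF unit y x lo hi] by auto
  then have wc: "cmod (half_circle_point s x y - c) \<le> h"
    unfolding c_def norm_half_circle_point_diff using x h
    by (intro norm_diff_box_center_le) auto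
  have w: "cmod (half_circle_point s x y) = 1"
    using unit by (simp add: norm_half_circle_point complex_norm)
  have "cmod (theta_head_deriv q0 c) \<le> g"
    using g(2,1) by (rule power2_le_imp_le)
  with norm_q0_le w wc h(3)
  have "cmod (theta_head q0 c) - g * h - 18/5 * h^2
      \<le> cmod (theta_head q0 (half_circle_point s x y))"
    by (rule norm_theta_head_ge_near)
  moreover have "12/1000 + g * h + 18/5 * h^2 \<le> cmod (theta_head q0 c)"
    using centre by (rule power2_le_imp_le) simp
  ultimately show ?thesis by linarith
qed

fun arc_cells :: "half_circle \<Rightarrow> arc_cell list" where
  "arc_cells Upper =
    [(-4/5, -3/5, 3/5, 4/5, 71/500, 49/100),
     (-3/5, -2/5, 4/5, 23/25, 117/1000, 7/10),
     (-2/5, -1/5, 91/100, 49/50, 53/500, 93/100),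
     (-1/5, 0, 97/100, 1, 51/500, 121/100),
     (0, 1/5, 97/100, 1, 51/500, 157/100),
     (1/5, 2/5, 91/100, 49/50, 53/500, 2),
     (2/5, 3/5, 4/5, 23/25, 117/1000, 253/100),
     (3/5, 4/5, 3/5, 4/5, 71/500, 63/20)]"
| "arc_cells Lower =
    [(-4/5, -7/10, 3/5, 18/25, 79/1000, 17/50),
     (-7/10, -3/5, 71/100, 4/5, 17/250, 27/50),
     (-3/5, -2/5, 4/5, 23/25, 117/1000, 22/25),
     (-2/5, -1/5, 91/100, 49/50, 53/500, 137/100),
     (-1/5, 0, 97/100, 1, 51/500, 19/10),
     (0, 1/5, 97/100, 1, 51/500, 49/20),
     (1/5, 2/5, 91/100, 49/50, 53/500, 151/50),
     (2/5, 3/5, 4/5, 23/25, 117/1000, 18/5),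
     (3/5, 4/5, 3/5, 4/5, 71/500, 103/25)]"
| "arc_cells Right =
    [(-3/5, -3/10, 4/5, 24/25, 17/100, 453/100),
     (-3/10, 0, 19/20, 1, 153/1000, 461/100),
     (0, 3/10, 19/20, 1, 153/1000, 219/50),
     (3/10, 3/5, 4/5, 24/25, 17/100, 77/20)]"
| "arc_cells Left =
    [(-3/5, -9/20, 4/5, 9/10, 91/1000, 17/100),
     (-9/20, -3/10, 89/100, 24/25, 83/1000, 9/100),
     (-3/10, -3/20, 19/20, 99/100, 39/500, 1/10),
     (-3/20, 0, 49/50, 1, 19/250, 11/100),
     (0, 3/20, 49/50, 1, 19/250, 13/100),
     (3/20, 3/10, 19/20, 99/100, 39/500, 4/25),
     (3/10, 9/20, 89/100, 24/25, 83/1000, 23/100),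
     (9/20, 3/5, 4/5, 9/10, 91/1000, 33/100)]"

lemma arc_cells_ok: "list_all (arc_cell_ok s) (arc_cells s)"
  unfolding arc_cell_ok_def cmod_power2
  by (cases s) (simp_all add: Let_def theta_head_def theta_head_deriv_def q0_def
      power2_eq_square power3_eq_cube power4_eq_xxxx)

lemma arc_cells_cover:
  "intervals_cover (- half_circle_bound s) (half_circle_bound s) (map (\<lambda>(a, b, _). (a, b)) (arc_cells s))"
  by (cases s) simp_all

lemma norm_theta_head_q0_ge:
  assumes "cmod w = 1"
  shows "12/1000 \<le> cmod (theta_head q0 w)"
proof -
  obtain s x y where w: "w = half_circle_point s x y" and unit: "x^2 + y^2 = 1" "0 \<le> y"
    and x: "\<bar>x\<bar> \<le> half_circle_bound s"
    using unit_circle_cover[OF assms] by blast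
  obtain a b yl yh h g where cell: "(a, b, yl, yh, h, g) \<in> set (arc_cells s)" and "a \<le> x" "x \<le> b"
    using intervals_cover_imp_ex[OF arc_cells_cover[of s], of x] x by fastforce
  moreover from cell have "arc_cell_ok s (a, b, yl, yh, h, g)"
    using arc_cells_ok[of s] by (simp add: list_all_iff)
  ultimately show ?thesis
    unfolding w using unit by (intro arc_cell_ok_imp_norm_theta_head_ge) auto
qed

section \<open>Perturbation to the box \<open>U\<close>\<close>

lemma norm_theta_head_diff_le:
  assumes "cmod w = 1"
  shows "cmod (theta_head q w - theta_head p w)
    \<le> cmod (q - p) * (2 + cmod q ^ 2 + cmod q * cmod p + cmod p ^ 2)"
proof -
  have "theta_head q w - theta_head p w = (q - p) * (1 + w^3 + (q^2 + q * p + p^2) * w^4)"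
    unfolding theta_head_def by algebra
  moreover have "cmod (1 + w^3 + (q^2 + q * p + p^2) * w^4) \<le> 2 + cmod q ^ 2 + cmod q * cmod p + cmod p ^ 2"
    using norm_le_sum3[of 1 "w^3" "(q^2 + q * p + p^2) * w^4"] norm_le_sum3[of "q^2" "q * p" "p^2"] assms
    by (simp add: norm_mult norm_power)
  ultimately show ?thesis
    by (simp add: norm_mult mult_left_mono)
qed

lemma U_bounds:
  assumes "q \<in> U"
  shows "q \<noteq> 0" "cmod q \<le> 23/50" "cmod (q - q0) \<le> 1/2000"
proof -
  have re: "0.4353 \<le> Re q" "Re q \<le> 0.4354" and im: "0.123 \<le> Im q" "Im q \<le> 0.1231"
    using assms by (auto simp: U_def rho_def tau_def eps_def)
  then show "q \<noteq> 0" by auto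
  have "Re q ^ 2 \<le> 0.4354 ^ 2" "Im q ^ 2 \<le> 0.1231 ^ 2"
    using re im by (intro power_mono; simp)+
  then have "Re q ^ 2 + Im q ^ 2 \<le> 0.4354 ^ 2 + 0.1231 ^ 2"
    by linarith
  then have "cmod q ^ 2 \<le> (23/50) ^ 2"
    by (simp add: cmod_power2 power_divide)
  then show "cmod q \<le> 23/50"
    by (rule power2_le_imp_le) simp
  have "cmod (q - q0) \<le> \<bar>Re (q - q0)\<bar> + \<bar>Im (q - q0)\<bar>"
    by (rule cmod_le)
  also have "\<dots> \<le> 0.0004 + 0.0001"
    using re im by (intro add_mono) (simp_all add: q0_def abs_le_iff)
  finally show "cmod (q - q0) \<le> 1/2000" by simp
qed

lemma norm_theta_head_ge_on_U:
  assumes "q \<in> U" "cmod w = 1"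
  shows "1/100 \<le> cmod (theta_head q w)"
proof -
  note q = U_bounds[OF assms(1)]
  have "cmod (theta_head q w - theta_head q0 w) \<le> cmod (q - q0) * (2 + cmod q ^ 2 + cmod q * cmod q0 + cmod q0 ^ 2)"
    using assms(2) by (rule norm_theta_head_diff_le)
  also have "\<dots> \<le> 1/2000 * (2 + (23/50)^2 + 23/50 * (23/50) + (23/50)^2)"
    using q norm_q0_le by (intro mult_mono add_mono power_mono) auto
  finally have "cmod (theta_head q w - theta_head q0 w) \<le> 2/1000"
    by (simp add: power_divide)
  moreover have "12/1000 \<le> cmod (theta_head q0 w)"
    using assms(2) by (rule norm_theta_head_q0_ge)
  ultimately show ?thesis
    using norm_triangle_ineq2[of "theta_head q0 w" "theta_head q w"] norm_minus_commute[of "theta_head q w" "theta_head q0 w"] by linarith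
qed

lemma norm_mult_theta_tail_lt:
  assumes r: "\<And>j. 5 \<le> j \<Longrightarrow> enat j \<le> n \<Longrightarrow> \<bar>r j\<bar> \<le> 1"
    and q: "q \<in> U" and z: "cmod z = 1 / cmod q ^ 2"
  shows "cmod (q * suminf (theta_tail_term r n q z)) < 1/100"
proof -
  define x where "x = cmod q"
  have x: "0 < x" "x \<le> 23/50" using U_bounds[OF q] by (auto simp: x_def)
  have "cmod (q * suminf (theta_tail_term r n q z)) \<le> x * (x ^ 5 / (1 - x ^ 4))"
    unfolding norm_mult x_def using norm_theta_tail_le[OF r] x z
    by (intro mult_left_mono) (auto simp: x_def)
  also have "\<dots> = x ^ 6 / (1 - x ^ 4)"
    by (simp add: power_Suc[symmetric] del: power_Suc)
  also have "\<dots> \<le> (23/50) ^ 6 / (1 - (23/50) ^ 4)"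
    using x by (intro frac_le power_mono diff_left_mono) (auto simp: power_divide)
  also have "\<dots> < 1/100"
    by (simp add: power_divide)
  finally show ?thesis .
qed

theorem lemma4:
  fixes n :: enat and r :: "nat \<Rightarrow> real" and q z :: complex
  assumes "5 \<le> n"
    and "\<And>j. 5 \<le> j \<Longrightarrow> enat j \<le> n \<Longrightarrow> r j \<in> {0..1}"
    and "q \<in> U"
    and "cmod z = 1 / (cmod q) ^ 2"
  shows "theta_r r n q z \<noteq> 0"
proof
  assume "theta_r r n q z = 0"
  then have "theta_head q (q^2 * z) = - q * suminf (theta_tail_term r n q z)"
    using mult_theta_r_eq[of q r n z] by (simp add: eq_neg_iff_add_eq_0)
  moreover have "cmod (q^2 * z) = 1"
    using assms(4) U_bounds(1)[OF assms(3)] by (simp add: norm_mult norm_power)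
  then have "1/100 \<le> cmod (theta_head q (q^2 * z))"
    using assms(3) norm_theta_head_ge_on_U by blast
  moreover have "\<bar>r j\<bar> \<le> 1" if "5 \<le> j" "enat j \<le> n" for j
    using assms(2)[OF that] by auto
  then have "cmod (q * suminf (theta_tail_term r n q z)) < 1/100"
    using assms(3,4) by (rule norm_mult_theta_tail_lt)
  ultimately show False by simp
qed

end
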